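(* If $M$ is a centrally endo-AIP right $R$-module, then $S=\mathrm{End}_R(M)$ is a semiprime ring.
   Context: For $N\le M$, $l_S(N)=\{\phi\in S:\phi(N)=0\}$. An ideal $I$ of $S$ is centrally s-unital if for every $a\in I$ there is $z\in I$ central in $S$ with $az=a$. $M$ is centrally endo-AIP if $l_S(N)$ is a centrally s-unital ideal of $S$ for every fully invariant submodule $N$ of $M$. *)

theory Defs
  imports "HOL-Algebra.Ideal"
begin

definition right_module :: "('m::ab_group_add \<Rightarrow> 'r::ring_1 \<Rightarrow> 'm) \<Rightarrow> bool" where
  "right_module act \<longleftrightarrow>
     (\<forall>x y r. act (x + y) r = act x r + act y r) \<and>
     (\<forall>x r s. act x (r + s) = act x r + act x s) \<and>
     (\<forall>x r s. act x (r * s) = act (act x r) s) \<and>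
     (\<forall>x. act x 1 = x)"

definition endos :: "('m::ab_group_add \<Rightarrow> 'r::ring_1 \<Rightarrow> 'm) \<Rightarrow> ('m \<Rightarrow> 'm) set" where
  "endos act = {f. (\<forall>x y. f (x + y) = f x + f y) \<and> (\<forall>x r. f (act x r) = act (f x) r)}"

definition End_ring :: "('m::ab_group_add \<Rightarrow> 'r::ring_1 \<Rightarrow> 'm) \<Rightarrow> ('m \<Rightarrow> 'm) ring" where
  "End_ring act = \<lparr>carrier = endos act, monoid.mult = (\<lambda>f g. f \<circ> g), one = id,
                   zero = (\<lambda>_. 0), add = (\<lambda>f g x. f x + g x)\<rparr>"

definition submodule :: "('m::ab_group_add \<Rightarrow> 'r::ring_1 \<Rightarrow> 'm) \<Rightarrow> 'm set \<Rightarrow> bool" where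
  "submodule act N \<longleftrightarrow> 0 \<in> N \<and> (\<forall>x\<in>N. \<forall>y\<in>N. x + y \<in> N) \<and> (\<forall>x\<in>N. - x \<in> N)
     \<and> (\<forall>x\<in>N. \<forall>r. act x r \<in> N)"

definition fully_invariant :: "('m::ab_group_add \<Rightarrow> 'r::ring_1 \<Rightarrow> 'm) \<Rightarrow> 'm set \<Rightarrow> bool" where
  "fully_invariant act N \<longleftrightarrow> submodule act N \<and> (\<forall>f\<in>endos act. f ` N \<subseteq> N)"

definition l_ann :: "('m::ab_group_add \<Rightarrow> 'r::ring_1 \<Rightarrow> 'm) \<Rightarrow> 'm set \<Rightarrow> ('m \<Rightarrow> 'm) set" where
  "l_ann act N = {f \<in> endos act. \<forall>x\<in>N. f x = 0}"

definition centrally_s_unital :: "('a, 'b) ring_scheme \<Rightarrow> 'a set \<Rightarrow> bool" where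
  "centrally_s_unital S I \<longleftrightarrow> ideal I S \<and>
     (\<forall>a\<in>I. \<exists>z\<in>I. (\<forall>s\<in>carrier S. z \<otimes>\<^bsub>S\<^esub> s = s \<otimes>\<^bsub>S\<^esub> z) \<and> a \<otimes>\<^bsub>S\<^esub> z = a)"

definition centrally_endo_AIP :: "('m::ab_group_add \<Rightarrow> 'r::ring_1 \<Rightarrow> 'm) \<Rightarrow> bool" where
  "centrally_endo_AIP act \<longleftrightarrow>
     (\<forall>N. fully_invariant act N \<longrightarrow> centrally_s_unital (End_ring act) (l_ann act N))"

definition semiprime :: "('a, 'b) ring_scheme \<Rightarrow> bool" where
  "semiprime S \<longleftrightarrow> ring S \<and>
     (\<forall>I. ideal I S \<and> (\<forall>a\<in>I. \<forall>b\<in>I. a \<otimes>\<^bsub>S\<^esub> b = \<zero>\<^bsub>S\<^esub>) \<longrightarrow> I = {\<zero>\<^bsub>S\<^esub>})"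

end

theory Submission
  imports Defs
begin

text \<open>Given an ideal \<open>I\<close> of \<open>S\<close> with \<open>I\<^sup>2 = 0\<close>, let \<open>N\<close> be the common kernel of \<open>I\<close>.
  Since \<open>I\<close> is a right ideal, \<open>N\<close> is fully invariant, so \<open>l\<^sub>S(N)\<close> is centrally s-unital;
  and \<open>I \<subseteq> l\<^sub>S(N)\<close> while \<open>I\<^sup>2 = 0\<close> says \<open>a(M) \<subseteq> N\<close> for every \<open>a \<in> I\<close>.  Taking a central
  \<open>z \<in> l\<^sub>S(N)\<close> with \<open>a z = a\<close> gives \<open>a = z a = 0\<close>, since \<open>z\<close> kills \<open>a(M) \<subseteq> N\<close>.\<close>

lemma End_ring_carrier [simp]: "carrier (End_ring act) = endos act"
  and End_ring_mult [simp]: "f \<otimes>\<^bsub>End_ring act\<^esub> g = f \<circ> g"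
  and End_ring_zero [simp]: "\<zero>\<^bsub>End_ring act\<^esub> = (\<lambda>_. 0)"
  by (simp_all add: End_ring_def)

lemma endos_additive: "f \<in> endos act \<Longrightarrow> f (x + y) = f x + f y"
  and endos_linear: "f \<in> endos act \<Longrightarrow> f (act x r) = act (f x) r"
  by (simp_all add: endos_def)

lemma endos_zero: "f \<in> endos act \<Longrightarrow> f 0 = 0"
  by (metis add_cancel_right_right endos_additive)

lemma endos_minus: "f \<in> endos act \<Longrightarrow> f (- x) = - f x"
  by (metis endos_additive endos_zero eq_neg_iff_add_eq_0 left_minus)

lemma right_module_act_add: "right_module act \<Longrightarrow> act (x + y) r = act x r + act y r"
  by (simp add: right_module_def)

lemma right_module_act_zero: "right_module act \<Longrightarrow> act 0 r = 0"
  by (metis add_cancel_right_right right_module_act_add)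

lemma right_module_act_minus:
  assumes "right_module act"
  shows "act (- x) r = - act x r"
proof -
  have "act (- x) r + act x r = 0"
    by (metis add.left_inverse assms right_module_act_add right_module_act_zero)
  then show ?thesis
    by (simp add: eq_neg_iff_add_eq_0)
qed

lemma ring_End_ring:
  assumes "right_module act"
  shows "ring (End_ring act)"
proof (rule ringI)
  show "abelian_group (End_ring act)"
  proof (rule abelian_groupI)
    fix f assume "f \<in> carrier (End_ring act)"
    then have "(\<lambda>x. - f x) \<in> endos act"
      using right_module_act_minus[OF assms] by (auto simp: endos_def)
    then show "\<exists>g\<in>carrier (End_ring act). g \<oplus>\<^bsub>End_ring act\<^esub> f = \<zero>\<^bsub>End_ring act\<^esub>"
      by (intro bexI[of _ "\<lambda>x. - f x"]) (auto simp: End_ring_def)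
  qed (auto simp: End_ring_def endos_def right_module_act_zero[OF assms] algebra_simps
        assms[unfolded right_module_def])
  show "monoid (End_ring act)"
    by (rule monoidI) (auto simp: End_ring_def endos_def)
qed (auto simp: End_ring_def endos_def)

definition common_kernel :: "('m \<Rightarrow> 'n::zero) set \<Rightarrow> 'm set" where
  "common_kernel I = {x. \<forall>f\<in>I. f x = 0}"

lemma l_ann_common_kernel: "I \<subseteq> endos act \<Longrightarrow> I \<subseteq> l_ann act (common_kernel I)"
  by (auto simp: l_ann_def common_kernel_def)

lemma fully_invariant_common_kernel:
  assumes "right_module act"
    and "I \<subseteq> endos act"
    and right_closed: "\<And>f g. f \<in> I \<Longrightarrow> g \<in> endos act \<Longrightarrow> f \<circ> g \<in> I"
  shows "fully_invariant act (common_kernel I)"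
proof -
  have "submodule act (common_kernel I)"
    using assms(2) unfolding submodule_def common_kernel_def subset_iff
    by (auto simp: endos_zero endos_minus endos_linear right_module_act_zero[OF assms(1)])
      (metis add_0 endos_additive)
  moreover have "g ` common_kernel I \<subseteq> common_kernel I" if "g \<in> endos act" for g
    using right_closed[OF _ that] by (fastforce simp: common_kernel_def)
  ultimately show ?thesis
    by (simp add: fully_invariant_def)
qed

lemma range_subset_common_kernel:
  assumes "\<And>b. b \<in> I \<Longrightarrow> b \<circ> a = (\<lambda>_. 0)"
  shows "range a \<subseteq> common_kernel I"
  using assms by (auto simp: common_kernel_def fun_eq_iff)

lemma centrally_s_unital_l_ann_range_subset_zero:
  assumes "centrally_s_unital (End_ring act) (l_ann act N)"
    and a: "a \<in> l_ann act N" and "range a \<subseteq> N"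
  shows "a = (\<lambda>_. 0)"
proof -
  obtain z where z: "z \<in> l_ann act N"
    and "\<forall>s\<in>endos act. z \<circ> s = s \<circ> z"
    and "a \<circ> z = a"
    using assms(1) a unfolding centrally_s_unital_def by auto
  moreover have "a \<in> endos act"
    using a by (simp add: l_ann_def)
  ultimately have "a = z \<circ> a"
    by simp
  moreover have "z (a x) = 0" for x
    using z \<open>range a \<subseteq> N\<close> by (auto simp: l_ann_def)
  ultimately show ?thesis
    by (metis comp_apply)
qed

theorem corollary3p2:
  fixes act :: "'m::ab_group_add \<Rightarrow> 'r::ring_1 \<Rightarrow> 'm"
  assumes "right_module act"
    and "centrally_endo_AIP act"
  shows "semiprime (End_ring act)"
  unfolding semiprime_def
proof (intro conjI allI impI)
  show "ring (End_ring act)"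
    using assms(1) by (rule ring_End_ring)
  fix I assume "ideal I (End_ring act) \<and> (\<forall>a\<in>I. \<forall>b\<in>I. a \<otimes>\<^bsub>End_ring act\<^esub> b = \<zero>\<^bsub>End_ring act\<^esub>)"
  then have I: "ideal I (End_ring act)" and square_zero: "\<And>a b. a \<in> I \<Longrightarrow> b \<in> I \<Longrightarrow> a \<circ> b = (\<lambda>_. 0)"
    by auto
  have I_endos: "I \<subseteq> endos act"
    using ideal.Icarr[OF I] by auto
  have "fully_invariant act (common_kernel I)"
    using ideal.I_r_closed[OF I] by (intro fully_invariant_common_kernel[OF assms(1) I_endos]) simp
  then have csu: "centrally_s_unital (End_ring act) (l_ann act (common_kernel I))"
    using assms(2) by (simp add: centrally_endo_AIP_def)
  have "a = (\<lambda>_. 0)" if "a \<in> I" for a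
  proof (rule centrally_s_unital_l_ann_range_subset_zero[OF csu])
    show "a \<in> l_ann act (common_kernel I)"
      using l_ann_common_kernel[OF I_endos] that by blast
    show "range a \<subseteq> common_kernel I"
      using square_zero that by (intro range_subset_common_kernel)
  qed
  moreover have "(\<lambda>_. 0) \<in> I"
    using additive_subgroup.zero_closed[OF ideal.axioms(1)[OF I]] by simp
  ultimately show "I = {\<zero>\<^bsub>End_ring act\<^esub>}"
    unfolding End_ring_zero by blast
qed

end
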